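(* Let $G$ be a weighted undirected graph on $n$ vertices with graph Laplacian $L$, let $\pi$ be a partition of its vertex set with indicator matrix $P$ and quotient Laplacian $L^\pi$, and let $E=LP-PL^\pi$. Let $(\lambda,v)$ be an eigenvalue–eigenvector pair of $L^\pi$ and suppose the equitable error satisfies $\|Ev\|\le\delta$. Let $x_1,\dots,x_n$ be an orthonormal eigenbasis of $L$ with $Lx_i=\lambda_ix_i$, let $\gamma>0$, let $\mathcal{A}=\{i:|\lambda_i-\lambda|<\gamma\}$, $m=|\mathcal{A}|$, and $u=\sum_{i\in\mathcal{A}}\langle Pv,x_i\rangle x_i$. Then $$\|Pv-u\|\le\frac{\delta}{\gamma}\sqrt{n-m}.$$
   Context: The graph Laplacian is $L=D-A$, with $A$ the weighted adjacency matrix and $D$ the diagonal matrix of its row sums. For a partition $\pi=\{V_1,\dots,V_k\}$ of the vertices, the indicator matrix $P\in\mathbb{R}^{n\times k}$ has $P_{il}=1$ if $v_i\in V_l$ and $0$ otherwise, and the quotient Laplacian is $L^\pi=(P^TP)^{-1}P^TLP$. The vector $Ev$ is called the equitable error of $v$. $\|\cdot\|$ denotes the Euclidean norm. *)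

theory Defs
  imports "HOL-Analysis.Analysis"
begin

definition weighted_adjacency :: "real^'n^'n \<Rightarrow> bool" where
  "weighted_adjacency A \<longleftrightarrow> transpose A = A \<and> (\<forall>i j. A $ i $ j \<ge> 0)"

definition degree_matrix :: "real^'n^'n \<Rightarrow> real^'n^'n" where
  "degree_matrix A = (\<chi> i j. if i = j then (\<Sum>k\<in>UNIV. A $ i $ k) else 0)"

definition laplacian :: "real^'n^'n \<Rightarrow> real^'n^'n" where
  "laplacian A = degree_matrix A - A"

text \<open>A partition of the vertex set into blocks indexed by 'k is given by a surjective
  block-assignment map f (surjectivity = every block nonempty).  Indicator matrix P.\<close>
definition indicator_matrix :: "('n \<Rightarrow> 'k) \<Rightarrow> real^'k^'n" where
  "indicator_matrix f = (\<chi> i l. if f i = l then 1 else 0)"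

definition quotient_laplacian :: "real^'n^'n \<Rightarrow> ('n \<Rightarrow> 'k) \<Rightarrow> real^'k^'k" where
  "quotient_laplacian L f =
     matrix_inv (transpose (indicator_matrix f) ** indicator_matrix f)
       ** transpose (indicator_matrix f) ** L ** indicator_matrix f"

definition equitable_error_matrix :: "real^'n^'n \<Rightarrow> ('n \<Rightarrow> 'k) \<Rightarrow> real^'k^'n" where
  "equitable_error_matrix L f =
     L ** indicator_matrix f - indicator_matrix f ** quotient_laplacian L f"

end

theory Submission
  imports Defs
begin

text \<open>The vector \<open>Pv\<close> is an approximate eigenvector of \<open>L\<close>: its residual \<open>L(Pv) - \<lambda>Pv\<close> is
  exactly the equitable error \<open>Ev\<close>, of norm at most \<open>\<delta>\<close>. Expanding \<open>Pv\<close> in the eigenbasis, the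
  residual has coefficients \<open>(\<lambda>\<^sub>i - \<lambda>)\<langle>Pv,x\<^sub>i\<rangle>\<close>, and outside \<open>\<A>\<close> we have \<open>|\<lambda>\<^sub>i - \<lambda>| \<ge> \<gamma>\<close>.
  By Parseval, \<open>\<gamma>\<^sup>2\<parallel>Pv - u\<parallel>\<^sup>2 \<le> \<parallel>Ev\<parallel>\<^sup>2 \<le> \<delta>\<^sup>2\<close>, which is even stronger than the claim
  unless \<open>m = n\<close>, in which case \<open>Pv = u\<close>.\<close>

lemma orthonormal_basis_norm_pow_2:
  fixes x :: "'n::finite \<Rightarrow> real^'n"
  assumes orth: "\<And>i j. x i \<bullet> x j = (if i = j then 1 else 0)"
  shows "norm z ^ 2 = (\<Sum>i\<in>UNIV. (z \<bullet> x i)^2)"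
proof -
  have inj: "inj x"
  proof (rule injI)
    fix i j assume "x i = x j"
    then show "i = j" using orth[of i j] orth[of j j] by (auto split: if_splits)
  qed
  have ind: "independent (range x)"
  proof (rule pairwise_orthogonal_independent)
    show "pairwise orthogonal (range x)"
      unfolding pairwise_def orthogonal_def using orth by auto
    show "0 \<notin> range x" using orth by (metis imageE inner_zero_left zero_neq_one)
  qed
  have "card (range x) = CARD('n)" using inj by (simp add: card_image)
  then have "UNIV \<subseteq> span (range x)"
    by (intro card_ge_dim_independent[OF _ ind]) auto
  then obtain a where "z = (\<Sum>v\<in>range x. a v *\<^sub>R v)"
    using span_finite[of "range x"] by auto
  then have z: "z = (\<Sum>i\<in>UNIV. a (x i) *\<^sub>R x i)"
    using sum.reindex[OF inj, of "\<lambda>v. a v *\<^sub>R v"] by simp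
  have coeff: "z \<bullet> x j = a (x j)" for j
    unfolding z by (simp add: inner_sum_left orth if_distrib cong: if_cong)
  have "norm z ^ 2 = z \<bullet> z" by (simp add: power2_norm_eq_inner)
  also have "\<dots> = (\<Sum>i\<in>UNIV. a (x i) * (x i \<bullet> z))"
    by (subst (1) z) (simp add: inner_sum_left)
  also have "\<dots> = (\<Sum>i\<in>UNIV. (z \<bullet> x i)^2)"
    by (simp add: coeff inner_commute power2_eq_square)
  finally show ?thesis .
qed

lemma norm_pow_2_diff_partial_expansion:
  fixes x :: "'n::finite \<Rightarrow> real^'n"
  assumes orth: "\<And>i j. x i \<bullet> x j = (if i = j then 1 else 0)"
  shows "norm (w - (\<Sum>i\<in>B. (w \<bullet> x i) *\<^sub>R x i)) ^ 2 = (\<Sum>i\<in>-B. (w \<bullet> x i)^2)"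
proof -
  have coeff: "(w - (\<Sum>i\<in>B. (w \<bullet> x i) *\<^sub>R x i)) \<bullet> x j = (if j \<in> B then 0 else w \<bullet> x j)"
    for j by (simp add: inner_diff_left inner_sum_left orth if_distrib cong: if_cong)
  have "norm (w - (\<Sum>i\<in>B. (w \<bullet> x i) *\<^sub>R x i)) ^ 2
          = (\<Sum>i\<in>UNIV. if i \<in> B then 0 else (w \<bullet> x i)^2)"
    unfolding orthonormal_basis_norm_pow_2[OF orth] coeff by (rule sum.cong) auto
  also have "\<dots> = (\<Sum>i\<in>-B. (w \<bullet> x i)^2)"
    by (simp add: sum.If_cases Compl_eq_Diff_UNIV)
  finally show ?thesis .
qed

lemma transpose_laplacian:
  assumes "weighted_adjacency A"
  shows "transpose (laplacian A) = laplacian A"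
proof -
  have "A $ i $ j = A $ j $ i" for i j
    using assms unfolding weighted_adjacency_def transpose_def by (metis vec_lambda_beta)
  then show ?thesis
    unfolding laplacian_def degree_matrix_def transpose_def by (simp add: vec_eq_iff)
qed

lemma equitable_error_eigenvector:
  assumes "quotient_laplacian L f *v v = lambda *\<^sub>R v"
  shows "equitable_error_matrix L f *v v
           = L *v (indicator_matrix f *v v) - lambda *\<^sub>R (indicator_matrix f *v v)"
  unfolding equitable_error_matrix_def
  by (simp add: assms matrix_vector_mult_diff_rdistrib matrix_vector_mul_assoc[symmetric]
      matrix_vector_mult_scaleR)

lemma inner_eigenvector_residual:
  fixes M :: "real^'n::finite^'n"
  assumes "transpose M = M" and "M *v y = mu *\<^sub>R y"
  shows "(M *v w - lambda *\<^sub>R w) \<bullet> y = (mu - lambda) * (w \<bullet> y)"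
proof -
  have "(M *v w) \<bullet> y = w \<bullet> (M *v y)"
    by (metis assms(1) dot_lmul_matrix inner_commute transpose_matrix_vector)
  then show ?thesis by (simp add: inner_diff_left assms(2) algebra_simps)
qed

lemma approximate_eigenvector_near_spectral_subspace:
  fixes M :: "real^'n::finite^'n"
    and x :: "'n \<Rightarrow> real^'n"
  assumes symM: "transpose M = M"
    and orth: "\<And>i j. x i \<bullet> x j = (if i = j then 1 else 0)"
    and eigM: "\<And>i. M *v x i = lam i *\<^sub>R x i"
    and res: "norm (M *v w - lambda *\<^sub>R w) \<le> delta"
    and gpos: "gamma > 0"
  shows "norm (w - (\<Sum>i\<in>{i. \<bar>lam i - lambda\<bar> < gamma}. (w \<bullet> x i) *\<^sub>R x i)) \<le> delta / gamma"
proof -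
  define B where "B = {i. \<bar>lam i - lambda\<bar> < gamma}"
  let ?r = "norm (w - (\<Sum>i\<in>B. (w \<bullet> x i) *\<^sub>R x i))"
  have "(gamma * ?r)^2 = (\<Sum>i\<in>-B. gamma^2 * (w \<bullet> x i)^2)"
    by (simp add: power_mult_distrib norm_pow_2_diff_partial_expansion[OF orth] sum_distrib_left)
  also have "\<dots> \<le> (\<Sum>i\<in>-B. ((lam i - lambda) * (w \<bullet> x i))^2)"
  proof (rule sum_mono)
    fix i assume "i \<in> -B"
    then have "gamma^2 \<le> (lam i - lambda)^2"
      using gpos by (simp add: B_def) (metis abs_le_square_iff abs_of_pos not_less)
    then show "gamma^2 * (w \<bullet> x i)^2 \<le> ((lam i - lambda) * (w \<bullet> x i))^2"
      by (simp add: power_mult_distrib mult_right_mono)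
  qed
  also have "\<dots> \<le> (\<Sum>i\<in>UNIV. ((lam i - lambda) * (w \<bullet> x i))^2)"
    by (rule sum_mono2) auto
  also have "\<dots> = norm (M *v w - lambda *\<^sub>R w) ^ 2"
    by (simp add: orthonormal_basis_norm_pow_2[OF orth] inner_eigenvector_residual[OF symM eigM])
  also have "\<dots> \<le> delta ^ 2"
    using res by (simp add: power_mono)
  finally have "gamma * ?r \<le> delta"
    using res by (meson norm_ge_zero order_trans power2_le_imp_le)
  then show ?thesis
    using gpos by (simp add: B_def field_simps)
qed

lemma partial_expansion_complete:
  fixes x :: "'n::finite \<Rightarrow> real^'n"
  assumes "\<And>i j. x i \<bullet> x j = (if i = j then 1 else 0)" and "card B = CARD('n)"
  shows "w - (\<Sum>i\<in>B. (w \<bullet> x i) *\<^sub>R x i) = 0"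
proof -
  have "-B = {}" using card_subset_eq[of UNIV B] assms(2) by auto
  then show ?thesis
    using norm_pow_2_diff_partial_expansion[OF assms(1), of w B] by simp
qed

theorem mainTheorem8:
  fixes A :: "real^'n::finite^'n"
    and f :: "'n \<Rightarrow> 'k::finite"
    and lambda delta gamma :: real
    and v :: "real^'k"
    and x :: "'n \<Rightarrow> real^'n"
    and lam :: "'n \<Rightarrow> real"
  assumes adj: "weighted_adjacency A"
    and part: "surj f"
    and v_nz: "v \<noteq> 0"
    and eig: "quotient_laplacian (laplacian A) f *v v = lambda *\<^sub>R v"
    and err: "norm (equitable_error_matrix (laplacian A) f *v v) \<le> delta"
    and orth: "\<And>i j. x i \<bullet> x j = (if i = j then 1 else 0)"
    and eigL: "\<And>i. laplacian A *v x i = lam i *\<^sub>R x i"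
    and gpos: "gamma > 0"
  shows "norm (indicator_matrix f *v v
           - (\<Sum>i\<in>{i. \<bar>lam i - lambda\<bar> < gamma}. ((indicator_matrix f *v v) \<bullet> x i) *\<^sub>R x i))
         \<le> delta / gamma * sqrt (real (CARD('n) - card {i. \<bar>lam i - lambda\<bar> < gamma}))"
proof -
  define B where "B = {i. \<bar>lam i - lambda\<bar> < gamma}"
  let ?r = "norm (indicator_matrix f *v v
              - (\<Sum>i\<in>B. ((indicator_matrix f *v v) \<bullet> x i) *\<^sub>R x i))"
  have "norm (laplacian A *v (indicator_matrix f *v v) - lambda *\<^sub>R (indicator_matrix f *v v))
          \<le> delta"
    using err equitable_error_eigenvector[OF eig] by simp
  from approximate_eigenvector_near_spectral_subspace[OF transpose_laplacian[OF adj] orth eigL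
      this gpos]
  have near: "?r \<le> delta / gamma" unfolding B_def .
  have "0 \<le> delta" using err norm_ge_zero order_trans by blast
  then have "0 \<le> delta / gamma" using gpos by simp
  moreover have "card B \<le> CARD('n)" by (simp add: card_mono)
  ultimately have "?r \<le> delta / gamma * sqrt (real (CARD('n) - card B))"
  proof (cases "card B = CARD('n)")
    case True
    then show ?thesis using partial_expansion_complete[OF orth] by simp
  next
    case False
    with \<open>card B \<le> CARD('n)\<close> have "1 \<le> sqrt (real (CARD('n) - card B))" by simp
    then have "delta / gamma \<le> delta / gamma * sqrt (real (CARD('n) - card B))"
      using \<open>0 \<le> delta / gamma\<close> mult_left_mono[of 1 _ "delta / gamma"] by simp
    with near show ?thesis by linarith
  qed
  then show ?thesis by (simp add: B_def)
qed

end
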